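(* Let $g>0$, $p_0<0$, $\gamma\in\mathbb{R}$, and let $\lambda_*>0$ with $\lambda_*-2\gamma p_0>0$ and $g-\gamma\sqrt{\lambda_*}\neq0$ satisfy the dispersion relation $$\frac{\lambda_*}{g-\gamma\sqrt{\lambda_*}}+\tanh\!\Big(\frac{2p_0}{\sqrt{\lambda_*}+\sqrt{\lambda_*-2\gamma p_0}}\Big)=0.$$ For $p\in[p_0,0]$ put $r(p)=\sqrt{\lambda_*-2\gamma p}$ and $r_0=r(p_0)$, and define $$H(p)=\frac{2(p-p_0)}{r(p)+r_0},\qquad Q^*=\lambda_*-\frac{4gp_0}{\sqrt{\lambda_*}+r_0},\qquad m(q,p)=\frac{r_0}{r(p)}\sinh(H(p))\cos q .$$ Assume $$\Delta:=(g-\gamma\sqrt{\lambda_*})^2-\lambda_*^2\neq0\qquad\text{and}\qquad 2gp_0+\lambda_*r_0+\sqrt{\lambda_*}\,r_0^2\neq0,$$ and set $$C_0=\frac{\sqrt{\lambda_*}\,\big[3g(g-\gamma\sqrt{\lambda_*})+\lambda_*(\gamma^2-\lambda_* )\big]\,(r_0+\sqrt{\lambda_*})}{4\,\Delta\,\big[2gp_0+\lambda_*r_0+\sqrt{\lambda_*}\,r_0^2\big]},\qquad C_2=\frac{3g(g-\gamma\sqrt{\lambda_*})+\lambda_*(\gamma^2-3\lambda_* )}{8\lambda_*^{5/2}} .$$ Define $$\begin{aligned}u(q,p)={}&r_0^2\Big[C_0\frac{H(p)}{r(p)}-\gamma\frac{1-\cosh(2H(p))}{8r^3(p)}+\frac{\sinh(2H(p))}{4r^2(p)}\Big]\\&+r_0^2\cos(2q)\Big[C_2\frac{\sinh(2H(p))}{r(p)}-\gamma\frac{1-\cosh(2H(p))}{8r^3(p)}+\frac{\sinh(2H(p))}{4r^2(p)}\Big],\end{aligned}$$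 and $h^*(q,p;b)=H(p)+b\,m(q,p)+b^2u(q,p)$. Then, with vorticity $\gamma$ and $Q=Q^*$: - the coefficients of $b^0,b^1,b^2$ in $\mathcal{H}[h^*](q,p)$ vanish identically on $R=[-\pi,\pi]\times[p_0,0]$; - the coefficients of $b^0,b^1,b^2$ in $\mathcal{B}_0[h^*](q)$ vanish for all $q$; - $\mathcal{B}_1[h^*]\equiv0$. That is, $\mathcal{H}[h^*]=\mathcal{O}(b^3)$, $\mathcal{B}_0[h^*]=\mathcal{O}(b^3)$ and $\mathcal{B}_1[h^*]=0$.
   Context: For a function $h(q,p)$ on the rectangle $R=[-\pi,\pi]\times[p_0,0]$, constants $g>0$ (gravity), $\gamma\in\mathbb{R}$ (vorticity), $Q\in\mathbb{R}$ (hydraulic head) and $p_0<0$ (relative mass flux), define $$\mathcal{H}[h]=(1+h_q^2)h_{pp}-2h_ph_qh_{pq}+h_p^2h_{qq}-\gamma h_p^3\quad\text{on } R,$$ $$\mathcal{B}_0[h](q)=1+h_q^2(q,0)+\big(2gh(q,0)-Q\big)h_p^2(q,0),\qquad \mathcal{B}_1[h](q)=h(q,p_0).$$ These are the equations for the height function in the Dubreil-Jacotin formulation of periodic travelling water waves with constant vorticity over a flat bed; $h$ is even and $2\pi$-periodic in $q$. When $h$ depends polynomially on a parameter $b$, these expressions are polynomials in $b$ with coefficients that are functions of $(q,p)$ (respectively of $q$). "$=\mathcal{O}(b^k)$" means the coefficients of $b^0,\dots,b^{k-1}$ vanish identically. The function $H$ is the laminar (trivial) solution and $m$ the solution of the linearised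 problem; for $\gamma=0$ the function $u$ reduces to the irrotational second-order term. *)

theory Defs
  imports "HOL-Analysis.Analysis"
begin

definition pd_q :: "(real \<Rightarrow> real \<Rightarrow> real) \<Rightarrow> real \<Rightarrow> real \<Rightarrow> real" where
  "pd_q h q p = deriv (\<lambda>x. h x p) q"

definition pd_p :: "(real \<Rightarrow> real \<Rightarrow> real) \<Rightarrow> real \<Rightarrow> real \<Rightarrow> real" where
  "pd_p h q p = deriv (\<lambda>y. h q y) p"

definition opH :: "real \<Rightarrow> (real \<Rightarrow> real \<Rightarrow> real) \<Rightarrow> real \<Rightarrow> real \<Rightarrow> real" where
  "opH \<gamma> h q p =
     (1 + (pd_q h q p)^2) * pd_p (pd_p h) q p
     - 2 * pd_p h q p * pd_q h q p * pd_q (pd_p h) q p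
     + (pd_p h q p)^2 * pd_q (pd_q h) q p
     - \<gamma> * (pd_p h q p)^3"

definition opB0 :: "real \<Rightarrow> real \<Rightarrow> (real \<Rightarrow> real \<Rightarrow> real) \<Rightarrow> real \<Rightarrow> real" where
  "opB0 g Q h q = 1 + (pd_q h q 0)^2 + (2 * g * h q 0 - Q) * (pd_p h q 0)^2"

definition opB1 :: "real \<Rightarrow> (real \<Rightarrow> real \<Rightarrow> real) \<Rightarrow> real \<Rightarrow> real" where
  "opB1 p0 h q = h q p0"

definition rr :: "real \<Rightarrow> real \<Rightarrow> real \<Rightarrow> real" where
  "rr lam \<gamma> p = sqrt (lam - 2 * \<gamma> * p)"

definition HH :: "real \<Rightarrow> real \<Rightarrow> real \<Rightarrow> real \<Rightarrow> real" where
  "HH lam \<gamma> p0 p = 2 * (p - p0) / (rr lam \<gamma> p + rr lam \<gamma> p0)"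

definition Qstar :: "real \<Rightarrow> real \<Rightarrow> real \<Rightarrow> real \<Rightarrow> real" where
  "Qstar g lam \<gamma> p0 = lam - 4 * g * p0 / (sqrt lam + rr lam \<gamma> p0)"

definition mm :: "real \<Rightarrow> real \<Rightarrow> real \<Rightarrow> real \<Rightarrow> real \<Rightarrow> real" where
  "mm lam \<gamma> p0 q p = rr lam \<gamma> p0 / rr lam \<gamma> p * sinh (HH lam \<gamma> p0 p) * cos q"

definition Delta :: "real \<Rightarrow> real \<Rightarrow> real \<Rightarrow> real" where
  "Delta g lam \<gamma> = (g - \<gamma> * sqrt lam)^2 - lam^2"

definition C0 :: "real \<Rightarrow> real \<Rightarrow> real \<Rightarrow> real \<Rightarrow> real" where
  "C0 g lam \<gamma> p0 =
     sqrt lam * (3 * g * (g - \<gamma> * sqrt lam) + lam * (\<gamma>^2 - lam)) * (rr lam \<gamma> p0 + sqrt lam)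
     / (4 * Delta g lam \<gamma> * (2 * g * p0 + lam * rr lam \<gamma> p0 + sqrt lam * (rr lam \<gamma> p0)^2))"

definition C2 :: "real \<Rightarrow> real \<Rightarrow> real \<Rightarrow> real" where
  "C2 g lam \<gamma> = (3 * g * (g - \<gamma> * sqrt lam) + lam * (\<gamma>^2 - 3 * lam)) / (8 * lam powr (5/2))"

definition uu :: "real \<Rightarrow> real \<Rightarrow> real \<Rightarrow> real \<Rightarrow> real \<Rightarrow> real \<Rightarrow> real" where
  "uu g lam \<gamma> p0 q p =
     (let r0 = rr lam \<gamma> p0; r = rr lam \<gamma> p; Hp = HH lam \<gamma> p0 p in
       r0^2 * (C0 g lam \<gamma> p0 * Hp / r - \<gamma> * (1 - cosh (2 * Hp)) / (8 * r^3) + sinh (2 * Hp) / (4 * r^2))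
     + r0^2 * cos (2 * q) * (C2 g lam \<gamma> * sinh (2 * Hp) / r - \<gamma> * (1 - cosh (2 * Hp)) / (8 * r^3)
                              + sinh (2 * Hp) / (4 * r^2)))"

definition hstar :: "real \<Rightarrow> real \<Rightarrow> real \<Rightarrow> real \<Rightarrow> real \<Rightarrow> real \<Rightarrow> real \<Rightarrow> real" where
  "hstar g lam \<gamma> p0 b q p = HH lam \<gamma> p0 p + b * mm lam \<gamma> p0 q p + b^2 * uu g lam \<gamma> p0 q p"

end

theory Submission
  imports Defs "HOL-Computational_Algebra.Polynomial"
begin

text \<open>
  The ansatz has the form h = H p + b A p cos q + b^2 (U0 p + U2 p cos 2q), so every operator
  applied to it is a polynomial of degree at most 6 in b, and it suffices to make the
  coefficients of b^0, b^1, b^2 vanish.  In the interior, H' = 1/r solves H'' = gamma H'^3,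
  the amplitude A = r p0 sinh H / r of m solves the linearised equation A'' = (A + 3 gamma A') / r^2,
  and the b^2 coefficient splits into the Fourier modes 1 and cos 2q, two linear equations for
  U0 and U2 forced by A.  They hold for every choice of C0 and C2, since H/r and sinh (2H)/r
  are homogeneous solutions.  On the surface p = 0 the b^0 condition is the definition of Q*,
  the b^1 condition is the dispersion relation, and the two modes of the b^2 condition hold by
  the choice of C0 and C2.  With T = g - gamma sqrt lam, the dispersion relation
  tanh H(0) = lam / T gives cosh 2H(0) = (T^2 + lam^2) / Delta and sinh 2H(0) = 2 lam T / Delta,
  which turns all surface computations into rational identities.
\<close>

section \<open>Polynomials in the amplitude\<close>

text \<open>The meaning of "= O(b^3)" in the statement.\<close>
definition poly_O3 :: "nat \<Rightarrow> (real \<Rightarrow> real) \<Rightarrow> bool" where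
  "poly_O3 N f \<longleftrightarrow> (\<exists>P. degree P \<le> N \<and> (\<forall>k<3. coeff P k = 0) \<and> f = poly P)"

lemma poly_eq_sum_from_3:
  fixes P :: "'a::comm_semiring_1 poly"
  assumes "degree P \<le> N" and "\<forall>k<3. coeff P k = 0"
  shows "poly P x = (\<Sum>k\<in>{3..N}. coeff P k * x ^ k)"
proof -
  have "poly P x = (\<Sum>k\<le>N. coeff P k * x ^ k)"
    using assms(1) by (simp add: poly_altdef coeff_eq_0 sum.mono_neutral_left)
  also have "\<dots> = (\<Sum>k\<in>{3..N}. coeff P k * x ^ k)"
    using assms(2) by (intro sum.mono_neutral_right) auto
  finally show ?thesis .
qed

lemma poly_O3_imp_sum:
  assumes "\<forall>x\<in>A. poly_O3 N (\<lambda>b. f b x)"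
  shows "\<exists>c. \<forall>b. \<forall>x\<in>A. f b x = (\<Sum>k\<in>{3..N}. c k x * b ^ k)"
proof -
  obtain P where P: "\<forall>x\<in>A. degree (P x) \<le> N \<and> (\<forall>k<3. coeff (P x) k = 0) \<and> (\<lambda>b. f b x) = poly (P x)"
    using assms unfolding poly_O3_def by metis
  have "f b x = (\<Sum>k\<in>{3..N}. coeff (P x) k * b ^ k)" if "x \<in> A" for b x
    using P that poly_eq_sum_from_3[of "P x" N b] by (metis (mono_tags))
  then show ?thesis by (intro exI[of _ "\<lambda>k x. coeff (P x) k"]) blast
qed

definition opH_poly :: "real \<Rightarrow> real poly \<Rightarrow> real poly \<Rightarrow> real poly \<Rightarrow> real poly \<Rightarrow> real poly \<Rightarrow> real poly" where
  "opH_poly \<gamma> Hq Hp Hqq Hqp Hpp =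
     (1 + Hq^2) * Hpp - smult 2 (Hp * Hq * Hqp) + Hp^2 * Hqq - smult \<gamma> (Hp^3)"

definition opB0_poly :: "real \<Rightarrow> real \<Rightarrow> real poly \<Rightarrow> real poly \<Rightarrow> real poly \<Rightarrow> real poly" where
  "opB0_poly g Q Hq Hp Hv = 1 + Hq^2 + (smult (2 * g) Hv - [:Q:]) * Hp^2"

lemma opH_eq_poly:
  assumes "pd_q h q p = poly Hq b" "pd_p h q p = poly Hp b" "pd_q (pd_q h) q p = poly Hqq b"
    "pd_q (pd_p h) q p = poly Hqp b" "pd_p (pd_p h) q p = poly Hpp b"
  shows "opH \<gamma> h q p = poly (opH_poly \<gamma> Hq Hp Hqq Hqp Hpp) b"
  by (simp add: opH_def opH_poly_def assms)

lemma opB0_eq_poly: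
  assumes "pd_q h q 0 = poly Hq b" "pd_p h q 0 = poly Hp b" "h q 0 = poly Hv b"
  shows "opB0 g Q h q = poly (opB0_poly g Q Hq Hp Hv) b"
  by (simp add: opB0_def opB0_poly_def assms)

lemma degree_mult_le_add: "degree p \<le> m \<Longrightarrow> degree q \<le> n \<Longrightarrow> degree (p * q) \<le> m + n"
  by (meson add_mono degree_mult_le order_trans)

lemma degree_quadratic_le: "degree [:a, b, c:] \<le> 2"
  by (simp add: degree_pCons_le)

lemma degree_opH_poly_le:
  assumes "degree Hq \<le> 2" "degree Hp \<le> 2" "degree Hqq \<le> 2" "degree Hqp \<le> 2" "degree Hpp \<le> 2"
  shows "degree (opH_poly \<gamma> Hq Hp Hqq Hqp Hpp) \<le> 6"
proof -
  have "degree (Hq^2) \<le> 4" "degree (Hp^2) \<le> 4" "degree (Hp^3) \<le> 6"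
    using assms degree_power_le[of Hq 2] degree_power_le[of Hp 2] degree_power_le[of Hp 3] by auto
  moreover from this have "degree (1 + Hq^2) \<le> 4"
    by (intro degree_add_le) auto
  ultimately have "degree ((1 + Hq^2) * Hpp) \<le> 6" "degree (Hp * Hq * Hqp) \<le> 6"
    "degree (Hp^2 * Hqq) \<le> 6" "degree (Hp^3) \<le> 6"
    using assms degree_mult_le_add[of "1 + Hq^2" 4 Hpp 2] degree_mult_le_add[of "Hp * Hq" 4 Hqp 2]
      degree_mult_le_add[of Hp 2 Hq 2] degree_mult_le_add[of "Hp^2" 4 Hqq 2]
    by auto
  then show ?thesis
    unfolding opH_poly_def by (intro degree_add_le degree_diff_le) (auto intro: order_trans[OF degree_smult_le])
qed

lemma degree_opB0_poly_le:
  assumes "degree Hq \<le> 2" "degree Hp \<le> 2" "degree Hv \<le> 2"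
  shows "degree (opB0_poly g Q Hq Hp Hv) \<le> 6"
proof -
  have "degree (Hq^2) \<le> 4" "degree (Hp^2) \<le> 4"
    using assms degree_power_le[of Hq 2] degree_power_le[of Hp 2] by auto
  moreover have "degree (smult (2 * g) Hv - [:Q:]) \<le> 2"
    using assms(3) by (intro degree_diff_le) (auto intro: order_trans[OF degree_smult_le])
  ultimately have "degree ((smult (2 * g) Hv - [:Q:]) * Hp^2) \<le> 6"
    using degree_mult_le_add by fastforce
  then show ?thesis
    unfolding opB0_poly_def using \<open>degree (Hq^2) \<le> 4\<close> by (intro degree_add_le) auto
qed

lemma coeff_opH_poly_quadratic:
  fixes \<gamma> a1 a2 d0 d1 d2 k1 k2 f1 f2 e0 e1 e2 :: real
  defines "P \<equiv> opH_poly \<gamma> [:0, a1, a2:] [:d0, d1, d2:] [:0, k1, k2:] [:0, f1, f2:] [:e0, e1, e2:]"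
  shows "coeff P 0 = e0 - \<gamma> * d0^3"
    and "coeff P 1 = e1 + d0^2 * k1 - 3 * \<gamma> * d0^2 * d1"
    and "coeff P 2 = e2 + a1^2 * e0 - 2 * d0 * a1 * f1 + d0^2 * k2 + 2 * d0 * d1 * k1
                     - 3 * \<gamma> * d0 * (d0 * d2 + d1^2)"
  unfolding P_def opH_poly_def
  by (simp_all add: power2_eq_square power3_eq_cube numeral_2_eq_2 algebra_simps)

lemma coeff_opB0_poly_quadratic:
  fixes g Q a1 a2 d0 d1 d2 v0 v1 v2 :: real
  defines "P \<equiv> opB0_poly g Q [:0, a1, a2:] [:d0, d1, d2:] [:v0, v1, v2:]"
  shows "coeff P 0 = 1 + (2 * g * v0 - Q) * d0^2"
    and "coeff P 1 = 2 * g * v1 * d0^2 + 2 * (2 * g * v0 - Q) * d0 * d1"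
    and "coeff P 2 = a1^2 + 2 * g * v2 * d0^2 + 4 * g * v1 * d0 * d1 + (2 * g * v0 - Q) * (2 * d0 * d2 + d1^2)"
  unfolding P_def opB0_poly_def
  by (simp_all add: power2_eq_square numeral_2_eq_2 algebra_simps)

section \<open>The second-order ansatz\<close>

definition cos_ansatz ::
    "(real \<Rightarrow> real) \<Rightarrow> (real \<Rightarrow> real) \<Rightarrow> (real \<Rightarrow> real) \<Rightarrow> (real \<Rightarrow> real) \<Rightarrow> real \<Rightarrow> real \<Rightarrow> real \<Rightarrow> real" where
  "cos_ansatz H A U0 U2 b q p = H p + b * (A p * cos q) + b^2 * (U0 p + U2 p * cos (2 * q))"

lemma partials_cos_ansatz:
  fixes H A U0 U2 H' A' U0' U2' H'' A'' U0'' U2'' :: "real \<Rightarrow> real" and b :: real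
  assumes S: "open S" "p \<in> S"
    and dH: "\<And>y. y \<in> S \<Longrightarrow> (H has_real_derivative H' y) (at y)"
    and dH': "\<And>y. y \<in> S \<Longrightarrow> (H' has_real_derivative H'' y) (at y)"
    and dA: "\<And>y. y \<in> S \<Longrightarrow> (A has_real_derivative A' y) (at y)"
    and dA': "\<And>y. y \<in> S \<Longrightarrow> (A' has_real_derivative A'' y) (at y)"
    and dU0: "\<And>y. y \<in> S \<Longrightarrow> (U0 has_real_derivative U0' y) (at y)"
    and dU0': "\<And>y. y \<in> S \<Longrightarrow> (U0' has_real_derivative U0'' y) (at y)"
    and dU2: "\<And>y. y \<in> S \<Longrightarrow> (U2 has_real_derivative U2' y) (at y)"
    and dU2': "\<And>y. y \<in> S \<Longrightarrow> (U2' has_real_derivative U2'' y) (at y)"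
  defines "h \<equiv> cos_ansatz H A U0 U2 b"
  shows "pd_q h q p = poly [:0, - A p * sin q, - 2 * U2 p * sin (2 * q):] b"
    and "pd_p h q p = poly [:H' p, A' p * cos q, U0' p + U2' p * cos (2 * q):] b"
    and "pd_q (pd_q h) q p = poly [:0, - A p * cos q, - 4 * U2 p * cos (2 * q):] b"
    and "pd_q (pd_p h) q p = poly [:0, - A' p * sin q, - 2 * U2' p * sin (2 * q):] b"
    and "pd_p (pd_p h) q p = poly [:H'' p, A'' p * cos q, U0'' p + U2'' p * cos (2 * q):] b"
proof -
  have hq: "pd_q h x y = - b * A y * sin x - 2 * b^2 * U2 y * sin (2 * x)" for x y
    unfolding pd_q_def h_def cos_ansatz_def
    by (rule DERIV_imp_deriv) (auto intro!: derivative_eq_intros simp: algebra_simps)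
  have hp: "pd_p h x y = H' y + b * (A' y * cos x) + b^2 * (U0' y + U2' y * cos (2 * x))" if "y \<in> S" for x y
    unfolding pd_p_def h_def cos_ansatz_def
    by (rule DERIV_imp_deriv) (auto intro!: derivative_eq_intros dH dA dU0 dU2 that simp: algebra_simps)
  show "pd_q h q p = poly [:0, - A p * sin q, - 2 * U2 p * sin (2 * q):] b"
    by (simp add: hq algebra_simps power2_eq_square)
  show "pd_p h q p = poly [:H' p, A' p * cos q, U0' p + U2' p * cos (2 * q):] b"
    by (simp add: hp S algebra_simps power2_eq_square)
  show "pd_q (pd_q h) q p = poly [:0, - A p * cos q, - 4 * U2 p * cos (2 * q):] b"
    unfolding pd_q_def[of "pd_q h"] hq
    by (rule DERIV_imp_deriv) (auto intro!: derivative_eq_intros simp: algebra_simps power2_eq_square)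
  show "pd_q (pd_p h) q p = poly [:0, - A' p * sin q, - 2 * U2' p * sin (2 * q):] b"
    unfolding pd_q_def[of "pd_p h"] hp[OF S(2)]
    by (rule DERIV_imp_deriv) (auto intro!: derivative_eq_intros simp: algebra_simps power2_eq_square)
  show "pd_p (pd_p h) q p = poly [:H'' p, A'' p * cos q, U0'' p + U2'' p * cos (2 * q):] b"
    unfolding pd_p_def[of "pd_p h"]
  proof (rule DERIV_imp_deriv, rule has_field_derivative_transform_within_open[OF _ S])
    show "((\<lambda>y. H' y + b * (A' y * cos q) + b^2 * (U0' y + U2' y * cos (2 * q))) has_real_derivative
      poly [:H'' p, A'' p * cos q, U0'' p + U2'' p * cos (2 * q):] b) (at p)"
      by (auto intro!: derivative_eq_intros dH' dA' dU0' dU2' S simp: algebra_simps power2_eq_square)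
  qed (simp add: hp)
qed

section \<open>The interior equation\<close>

locale laminar_flow =
  fixes lam \<gamma> p0 :: real
  assumes lam_pos: "lam > 0" and lam_bed_pos: "lam - 2 * \<gamma> * p0 > 0"
begin

abbreviation "r \<equiv> rr lam \<gamma>"
abbreviation "H \<equiv> HH lam \<gamma> p0"

definition smooth_dom :: "real set" where
  "smooth_dom = {y. 2 * \<gamma> * y < lam}"

text \<open>
  In the notation of the statement, m q p = amp p * cos q and
  u q p = u_mean C0 p + u_harm C2 p * cos (2 q), with the constants C0, C2 left as a parameter c;
  the suffixes _d1 and _d2 mark the first and second derivatives in p.
\<close>

definition amp :: "real \<Rightarrow> real" where
  "amp y = r p0 / r y * sinh (H y)"
definition amp_d1 :: "real \<Rightarrow> real" where
  "amp_d1 y = r p0 * (cosh (H y) / r y ^ 2 + \<gamma> * sinh (H y) / r y ^ 3)"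
definition amp_d2 :: "real \<Rightarrow> real" where
  "amp_d2 y = r p0 * (sinh (H y) / r y ^ 3 + 3 * \<gamma> * cosh (H y) / r y ^ 4 + 3 * \<gamma>^2 * sinh (H y) / r y ^ 5)"

definition u_common :: "real \<Rightarrow> real" where
  "u_common y = \<gamma> * (cosh (2 * H y) - 1) / (8 * r y ^ 3) + sinh (2 * H y) / (4 * r y ^ 2)"
definition u_common_d1 :: "real \<Rightarrow> real" where
  "u_common_d1 y = 3 * \<gamma>^2 * (cosh (2 * H y) - 1) / (8 * r y ^ 5) + 3 * \<gamma> * sinh (2 * H y) / (4 * r y ^ 4)
     + cosh (2 * H y) / (2 * r y ^ 3)"
definition u_common_d2 :: "real \<Rightarrow> real" where
  "u_common_d2 y = 15 * \<gamma>^3 * (cosh (2 * H y) - 1) / (8 * r y ^ 7) + 15 * \<gamma>^2 * sinh (2 * H y) / (4 * r y ^ 6)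
     + 3 * \<gamma> * cosh (2 * H y) / r y ^ 5 + sinh (2 * H y) / r y ^ 4"

definition u_mean :: "real \<Rightarrow> real \<Rightarrow> real" where
  "u_mean c y = r p0 ^ 2 * (c * H y / r y + u_common y)"
definition u_mean_d1 :: "real \<Rightarrow> real \<Rightarrow> real" where
  "u_mean_d1 c y = r p0 ^ 2 * (c * (1 / r y ^ 2 + \<gamma> * H y / r y ^ 3) + u_common_d1 y)"
definition u_mean_d2 :: "real \<Rightarrow> real \<Rightarrow> real" where
  "u_mean_d2 c y = r p0 ^ 2 * (c * (3 * \<gamma> / r y ^ 4 + 3 * \<gamma>^2 * H y / r y ^ 5) + u_common_d2 y)"

definition u_harm :: "real \<Rightarrow> real \<Rightarrow> real" where
  "u_harm c y = r p0 ^ 2 * (c * sinh (2 * H y) / r y + u_common y)"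
definition u_harm_d1 :: "real \<Rightarrow> real \<Rightarrow> real" where
  "u_harm_d1 c y = r p0 ^ 2 * (c * (2 * cosh (2 * H y) / r y ^ 2 + \<gamma> * sinh (2 * H y) / r y ^ 3) + u_common_d1 y)"
definition u_harm_d2 :: "real \<Rightarrow> real \<Rightarrow> real" where
  "u_harm_d2 c y = r p0 ^ 2 * (c * (4 * sinh (2 * H y) / r y ^ 3 + 6 * \<gamma> * cosh (2 * H y) / r y ^ 4
     + 3 * \<gamma>^2 * sinh (2 * H y) / r y ^ 5) + u_common_d2 y)"

lemma r_pos: "y \<in> smooth_dom \<Longrightarrow> r y > 0"
  by (simp add: smooth_dom_def rr_def)

lemma open_smooth_dom: "open smooth_dom"
  unfolding smooth_dom_def by (rule open_Collect_less) (auto intro!: continuous_intros)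

lemma bed_in_smooth_dom: "p0 \<in> smooth_dom"
  using lam_bed_pos by (simp add: smooth_dom_def)

lemma r_has_derivative: "y \<in> smooth_dom \<Longrightarrow> (r has_real_derivative - \<gamma> / r y) (at y)"
  unfolding rr_def smooth_dom_def by (auto intro!: derivative_eq_intros simp: field_simps)

lemma H_has_derivative:
  assumes "y \<in> smooth_dom"
  shows "(H has_real_derivative 1 / r y) (at y)"
proof -
  have r: "r y > 0" "r p0 > 0" using r_pos assms bed_in_smooth_dom by auto
  have "2 * r y * (r y + r p0) + 2 * (y - p0) * \<gamma> = (r y + r p0)^2"
    using assms lam_bed_pos by (simp add: rr_def smooth_dom_def power2_eq_square algebra_simps)
  then have "(2 * (r y + r p0) - 2 * (y - p0) * (- \<gamma> / r y)) / (r y + r p0)^2 = 1 / r y"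
    using r by (simp add: field_simps)
  moreover have "(H has_real_derivative (2 * (r y + r p0) - 2 * (y - p0) * (- \<gamma> / r y)) / (r y + r p0)^2) (at y)"
    unfolding HH_def using r by (auto intro!: derivative_eq_intros r_has_derivative assms simp: power2_eq_square)
  ultimately show ?thesis by simp
qed

lemma profile_has_derivatives:
  assumes "y \<in> smooth_dom"
  shows "((\<lambda>y. 1 / r y) has_real_derivative \<gamma> / r y ^ 3) (at y)"
    and "(amp has_real_derivative amp_d1 y) (at y)"
    and "(amp_d1 has_real_derivative amp_d2 y) (at y)"
    and "(u_mean c has_real_derivative u_mean_d1 c y) (at y)"
    and "(u_mean_d1 c has_real_derivative u_mean_d2 c y) (at y)"
    and "(u_harm c has_real_derivative u_harm_d1 c y) (at y)"
    and "(u_harm_d1 c has_real_derivative u_harm_d2 c y) (at y)"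
  using r_pos[OF assms]
  unfolding amp_def[abs_def] amp_d1_def[abs_def] amp_d2_def u_mean_def[abs_def] u_mean_d1_def[abs_def]
    u_mean_d2_def u_harm_def[abs_def] u_harm_d1_def[abs_def] u_harm_d2_def u_common_def u_common_d1_def
    u_common_d2_def
  by (auto intro!: derivative_eq_intros r_has_derivative H_has_derivative assms
      simp: field_simps eval_nat_numeral)

lemma amp_ode:
  assumes "y \<in> smooth_dom"
  shows "amp_d2 y = (amp y + 3 * \<gamma> * amp_d1 y) / r y ^ 2"
  using r_pos[OF assms] by (simp add: amp_def amp_d1_def amp_d2_def field_simps eval_nat_numeral)

lemma amp_products:
  assumes "y \<in> smooth_dom"
  shows "amp y ^ 2 = r p0 ^ 2 * (cosh (2 * H y) - 1) / (2 * r y ^ 2)"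
    and "amp y * amp_d1 y = r p0 ^ 2 * (sinh (2 * H y) / (2 * r y ^ 3) + \<gamma> * (cosh (2 * H y) - 1) / (2 * r y ^ 4))"
    and "amp_d1 y ^ 2 = r p0 ^ 2 * ((cosh (2 * H y) + 1) / (2 * r y ^ 4) + \<gamma> * sinh (2 * H y) / r y ^ 5
           + \<gamma>^2 * (cosh (2 * H y) - 1) / (2 * r y ^ 6))"
proof -
  have "r y > 0" using r_pos[OF assms] .
  moreover have "cosh (H y) ^ 2 = 1 + sinh (H y) ^ 2" by (simp add: cosh_square_eq)
  ultimately show "amp y ^ 2 = r p0 ^ 2 * (cosh (2 * H y) - 1) / (2 * r y ^ 2)"
    and "amp y * amp_d1 y = r p0 ^ 2 * (sinh (2 * H y) / (2 * r y ^ 3) + \<gamma> * (cosh (2 * H y) - 1) / (2 * r y ^ 4))"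
    and "amp_d1 y ^ 2 = r p0 ^ 2 * ((cosh (2 * H y) + 1) / (2 * r y ^ 4) + \<gamma> * sinh (2 * H y) / r y ^ 5
           + \<gamma>^2 * (cosh (2 * H y) - 1) / (2 * r y ^ 6))"
    by (simp_all add: amp_def amp_d1_def sinh_double cosh_double field_simps power2_eq_square eval_nat_numeral)
qed

lemma u_mean_ode:
  assumes "y \<in> smooth_dom"
  shows "u_mean_d2 c y - 3 * \<gamma> * u_mean_d1 c y / r y ^ 2
    + \<gamma> * amp y ^ 2 / (2 * r y ^ 3) - 2 * amp y * amp_d1 y / r y - 3 * \<gamma> * amp_d1 y ^ 2 / (2 * r y) = 0"
  using r_pos[OF assms] unfolding mult.assoc[of 2 "amp y"] amp_products[OF assms]
  by (simp add: u_mean_d1_def u_mean_d2_def u_common_d1_def u_common_d2_def field_simps eval_nat_numeral)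

lemma u_harm_ode:
  assumes "y \<in> smooth_dom"
  shows "u_harm_d2 c y - 4 * u_harm c y / r y ^ 2 - 3 * \<gamma> * u_harm_d1 c y / r y ^ 2
    - \<gamma> * amp y ^ 2 / (2 * r y ^ 3) - 3 * \<gamma> * amp_d1 y ^ 2 / (2 * r y) = 0"
  using r_pos[OF assms] unfolding amp_products[OF assms]
  by (simp add: u_harm_def u_harm_d1_def u_harm_d2_def u_common_def u_common_d1_def u_common_d2_def field_simps eval_nat_numeral)

lemma layer_subset_smooth_dom: "{p0..0} \<subseteq> smooth_dom"
proof
  fix p assume p: "p \<in> {p0..0}"
  show "p \<in> smooth_dom"
  proof (cases "\<gamma> \<ge> 0")
    case True
    then have "2 * \<gamma> * p \<le> 0" using p by (simp add: mult_nonneg_nonpos)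
    then show ?thesis using lam_pos by (simp add: smooth_dom_def)
  next
    case False
    then have "2 * \<gamma> * p \<le> 2 * \<gamma> * p0" using p by (simp add: mult_le_cancel_left)
    then show ?thesis using lam_bed_pos by (simp add: smooth_dom_def)
  qed
qed

lemma zero_in_smooth_dom: "0 \<in> smooth_dom"
  using lam_pos by (simp add: smooth_dom_def)

lemma r_surface: "r 0 = sqrt lam"
  by (simp add: rr_def)

lemma H_surface: "H 0 * (sqrt lam + r p0) = - 2 * p0"
proof -
  have "sqrt lam + r p0 > 0" using lam_pos lam_bed_pos by (simp add: rr_def add_pos_pos)
  then show ?thesis by (simp add: HH_def r_surface)
qed

lemma Qstar_eq: "Qstar g lam \<gamma> p0 = lam + 2 * g * H 0"
  by (simp add: Qstar_def HH_def r_surface)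

lemma C2_eq: "C2 g lam \<gamma> = (3 * g * (g - \<gamma> * sqrt lam) + lam * (\<gamma>^2 - 3 * lam)) / (8 * sqrt lam ^ 5)"
proof -
  have "lam powr (5/2) = sqrt lam ^ 5"
    using lam_pos by (simp add: powr_half_sqrt[symmetric] powr_realpow[symmetric] powr_powr)
  then show ?thesis by (simp add: C2_def)
qed

lemma hstar_eq_cos_ansatz:
  "hstar g lam \<gamma> p0 b = cos_ansatz H amp (u_mean (C0 g lam \<gamma> p0)) (u_harm (C2 g lam \<gamma>)) b"
  by (auto simp: fun_eq_iff hstar_def cos_ansatz_def mm_def uu_def Let_def amp_def u_mean_def u_harm_def
      u_common_def algebra_simps add_divide_distrib diff_divide_distrib)

lemma partials_profile_ansatz:
  fixes c0 c2 b :: real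
  assumes "y \<in> smooth_dom"
  defines "h \<equiv> cos_ansatz H amp (u_mean c0) (u_harm c2) b"
  shows "pd_q h q y = poly [:0, - amp y * sin q, - 2 * u_harm c2 y * sin (2 * q):] b"
    and "pd_p h q y = poly [:1 / r y, amp_d1 y * cos q, u_mean_d1 c0 y + u_harm_d1 c2 y * cos (2 * q):] b"
    and "pd_q (pd_q h) q y = poly [:0, - amp y * cos q, - 4 * u_harm c2 y * cos (2 * q):] b"
    and "pd_q (pd_p h) q y = poly [:0, - amp_d1 y * sin q, - 2 * u_harm_d1 c2 y * sin (2 * q):] b"
    and "pd_p (pd_p h) q y = poly [:\<gamma> / r y ^ 3, amp_d2 y * cos q, u_mean_d2 c0 y + u_harm_d2 c2 y * cos (2 * q):] b"
  unfolding h_def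
  by (rule partials_cos_ansatz[where H' = "\<lambda>y. 1 / r y" and H'' = "\<lambda>y. \<gamma> / r y ^ 3",
        OF open_smooth_dom assms(1) H_has_derivative profile_has_derivatives]; assumption)+

lemma opH_cos_ansatz_poly_O3:
  assumes "y \<in> smooth_dom"
  shows "poly_O3 6 (\<lambda>b. opH \<gamma> (cos_ansatz H amp (u_mean c0) (u_harm c2) b) q y)"
proof -
  define P where "P = opH_poly \<gamma> [:0, - amp y * sin q, - 2 * u_harm c2 y * sin (2 * q):]
    [:1 / r y, amp_d1 y * cos q, u_mean_d1 c0 y + u_harm_d1 c2 y * cos (2 * q):]
    [:0, - amp y * cos q, - 4 * u_harm c2 y * cos (2 * q):]
    [:0, - amp_d1 y * sin q, - 2 * u_harm_d1 c2 y * sin (2 * q):]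
    [:\<gamma> / r y ^ 3, amp_d2 y * cos q, u_mean_d2 c0 y + u_harm_d2 c2 y * cos (2 * q):]"
  have r: "r y > 0" using r_pos[OF assms] .
  have "coeff P 0 = 0"
    unfolding P_def coeff_opH_poly_quadratic by (simp add: power_divide)
  moreover have "coeff P 1 = 0"
    unfolding P_def coeff_opH_poly_quadratic amp_ode[OF assms] using r by (simp add: field_simps)
  moreover have "coeff P 2 = 0"
  proof -
    have "coeff P 2 = (u_mean_d2 c0 y - 3 * \<gamma> * u_mean_d1 c0 y / r y ^ 2
        + \<gamma> * amp y ^ 2 / (2 * r y ^ 3) - 2 * amp y * amp_d1 y / r y - 3 * \<gamma> * amp_d1 y ^ 2 / (2 * r y))
      + cos (2 * q) * (u_harm_d2 c2 y - 4 * u_harm c2 y / r y ^ 2 - 3 * \<gamma> * u_harm_d1 c2 y / r y ^ 2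
        - \<gamma> * amp y ^ 2 / (2 * r y ^ 3) - 3 * \<gamma> * amp_d1 y ^ 2 / (2 * r y))"
      unfolding P_def coeff_opH_poly_quadratic cos_double_sin[of q] using r
      by (simp add: field_simps) (insert sin_cos_squared_add[of q], algebra)
    then show ?thesis unfolding u_mean_ode[OF assms] u_harm_ode[OF assms] by simp
  qed
  moreover have "degree P \<le> 6"
    unfolding P_def by (intro degree_opH_poly_le degree_quadratic_le)
  moreover have "opH \<gamma> (cos_ansatz H amp (u_mean c0) (u_harm c2) b) q y = poly P b" for b
    unfolding P_def by (intro opH_eq_poly partials_profile_ansatz assms)
  ultimately show ?thesis
    unfolding poly_O3_def by (intro exI[of _ P]) (auto simp: less_Suc_eq numeral_3_eq_3 numeral_2_eq_2 fun_eq_iff)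
qed

end

section \<open>The surface condition\<close>

locale surface_dispersion = laminar_flow +
  fixes g :: real
  assumes g_ne: "g - \<gamma> * sqrt lam \<noteq> 0"
    and dispersion: "lam / (g - \<gamma> * sqrt lam) + tanh (2 * p0 / (sqrt lam + sqrt (lam - 2 * \<gamma> * p0))) = 0"
    and Delta_ne: "Delta g lam \<gamma> \<noteq> 0"
    and C0_den_ne: "2 * g * p0 + lam * r p0 + sqrt lam * r p0 ^ 2 \<noteq> 0"
begin

lemma surface_dispersion_relation: "sinh (H 0) * (g - \<gamma> * sqrt lam) = lam * cosh (H 0)"
proof -
  have "2 * p0 / (sqrt lam + sqrt (lam - 2 * \<gamma> * p0)) = - H 0"
    by (simp add: HH_def rr_def)
  then have "tanh (H 0) = lam / (g - \<gamma> * sqrt lam)"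
    using dispersion by simp
  then show ?thesis using g_ne by (simp add: tanh_def field_simps)
qed

lemma surface_double_angle:
  defines "T \<equiv> g - \<gamma> * sqrt lam"
  shows "cosh (2 * H 0) * Delta g lam \<gamma> = T^2 + lam^2"
    and "sinh (2 * H 0) * Delta g lam \<gamma> = 2 * lam * T"
proof -
  define s c D where "s = sinh (H 0)" and "c = cosh (H 0)" and "D = Delta g lam \<gamma>"
  have st: "s * T = lam * c" using surface_dispersion_relation by (simp add: s_def c_def T_def)
  have sc: "c^2 = 1 + s^2" by (simp add: s_def c_def cosh_square_eq)
  have D: "D = T^2 - lam^2" by (simp add: D_def Delta_def T_def)
  have "s^2 * D = (s * T)^2 - s^2 * lam^2" by (simp add: D power_mult_distrib algebra_simps)
  also have "\<dots> = lam^2" unfolding st by (simp add: sc power_mult_distrib algebra_simps)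
  finally have s2: "s^2 * D = lam^2" .
  have "c * s * D * T = lam * (c^2 * D)" using st by (simp add: power2_eq_square algebra_simps)
  also have "\<dots> = lam * (D + s^2 * D)" by (simp add: sc algebra_simps)
  also have "\<dots> = lam * (D + lam^2)" by (simp add: s2)
  also have "\<dots> = lam * T * T" by (simp add: D power2_eq_square)
  finally have "c * s * D = lam * T" using g_ne by (simp add: T_def)
  moreover have "sinh (2 * H 0) * D = 2 * (c * s * D)" by (simp add: sinh_double s_def c_def)
  ultimately show "sinh (2 * H 0) * D = 2 * lam * T" by simp
  show "cosh (2 * H 0) * D = T^2 + lam^2"
    using s2 by (simp add: cosh_double sc D algebra_simps flip: s_def c_def)
qed

lemma surface_order1: "g * amp 0 = lam * sqrt lam * amp_d1 0"
proof -
  have sl: "sqrt lam > 0" "sqrt lam ^ 2 = lam" using lam_pos by auto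
  have "g * amp 0 = r p0 * (g * sinh (H 0)) / sqrt lam"
    by (simp add: amp_def r_surface)
  also have "\<dots> = r p0 * (lam * cosh (H 0) + \<gamma> * sqrt lam * sinh (H 0)) / sqrt lam"
    using surface_dispersion_relation by (simp add: algebra_simps)
  also have "\<dots> = lam * sqrt lam * amp_d1 0"
    using sl by (simp add: amp_d1_def r_surface field_simps eval_nat_numeral)
  finally show ?thesis .
qed

text \<open>The modes 0 and cos 2q of the b^2 surface condition; these are what fix C0 and C2.\<close>

lemma surface_mode2:
  "- (amp 0 ^ 2) / 2 + 2 * g * u_harm (C2 g lam \<gamma>) 0 / lam + 2 * g * (amp 0 * amp_d1 0) / sqrt lam
     - 2 * sqrt lam * u_harm_d1 (C2 g lam \<gamma>) 0 - lam * amp_d1 0 ^ 2 / 2 = 0"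
proof -
  define sl where "sl = sqrt lam"
  define D where "D = Delta g lam \<gamma>"
  define X Y where "X = cosh (2 * H 0)" and "Y = sinh (2 * H 0)"
  define r0 C where "r0 = r p0" and "C = C2 g lam \<gamma>"
  define T where "T = g - \<gamma> * sl"
  have sl: "sl > 0" "sl * sl = lam" using lam_pos by (auto simp: sl_def)
  have D: "D = T^2 - (sl * sl)^2" "D \<noteq> 0" using Delta_ne by (simp_all add: D_def Delta_def T_def sl_def)
  have X: "X * D = T^2 + (sl * sl)^2" and Y: "Y * D = 2 * (sl * sl) * T"
    using surface_double_angle lam_pos by (simp_all add: X_def Y_def D_def T_def sl sl_def)
  have X1: "(1 - X) * D = - 2 * (sl * sl)^2"
    using X D(1) by (simp only: left_diff_distrib mult_1)
  have C: "C = (3 * g * T + (sl * sl) * (\<gamma>^2 - 3 * (sl * sl))) / (8 * sl^5)"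
    using C2_eq sl by (simp add: C_def T_def sl_def)
  txt \<open>The expression is linear in X and Y, whose products with D are known.\<close>
  define a b c where "a = \<gamma>^2 / sl^4 - 5 * g * \<gamma> / (4 * sl^5)"
    and "b = 3 / (2 * sl^2) + 4 * C / sl"
    and "c = 2 * C * T / sl^3 + (3 * g - 4 * \<gamma> * sl) / (2 * sl^4)"
  define F where "F = a * (1 - X) - b * X + c * Y"
  have "- (amp 0 ^ 2) / 2 + 2 * g * u_harm C 0 / lam + 2 * g * (amp 0 * amp_d1 0) / sqrt lam
     - 2 * sqrt lam * u_harm_d1 C 0 - lam * amp_d1 0 ^ 2 / 2 = r0^2 * F"
    unfolding amp_products[OF zero_in_smooth_dom] u_harm_def u_harm_d1_def u_common_def u_common_d1_def
      r_surface sl_def[symmetric] X_def[symmetric] Y_def[symmetric] r0_def[symmetric] F_def a_def b_def c_def T_def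
    unfolding sl(2)[symmetric]
    using sl(1) by (simp add: field_simps eval_nat_numeral)
  moreover have "F * D = 0"
  proof -
    have "F * D = a * ((1 - X) * D) - b * (X * D) + c * (Y * D)"
      by (simp add: F_def algebra_simps)
    also have "\<dots> = a * (- 2 * (sl * sl)^2) - b * (T^2 + (sl * sl)^2) + c * (2 * (sl * sl) * T)"
      by (simp only: X Y X1)
    also have "\<dots> = 0"
      using sl(1) unfolding a_def b_def c_def C T_def
      by (simp add: field_simps) (simp add: algebra_simps power2_eq_square eval_nat_numeral)
    finally show ?thesis .
  qed
  ultimately show ?thesis using D(2) by (simp add: C_def)
qed

lemma surface_C0_term:
  "2 * C0 g lam \<gamma> p0 / sqrt lam ^ 3 * (g * H 0 - lam - \<gamma> * sqrt lam * H 0) * Delta g lam \<gamma>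
     = - (3 * g * (g - \<gamma> * sqrt lam) + lam * (\<gamma>^2 - lam)) / (2 * lam)"
proof -
  define sl r0 den where "sl = sqrt lam" and "r0 = r p0" and "den = 2 * g * p0 + lam * r0 + sl * r0^2"
  define X' where "X' = 3 * g * (g - \<gamma> * sl) + lam * (\<gamma>^2 - lam)"
  have sl: "sl > 0" "sl * sl = lam" using lam_pos by (auto simp: sl_def)
  have r0: "r0 > 0" "r0^2 = lam - 2 * \<gamma> * p0" using lam_bed_pos by (auto simp: r0_def rr_def)
  have pos: "sl + r0 > 0" using sl(1) r0(1) by auto
  have den: "den \<noteq> 0" using C0_den_ne by (simp add: den_def r0_def sl_def)
  have "(g * H 0 - lam - \<gamma> * sl * H 0) * (sl + r0)
      = g * (H 0 * (sl + r0)) - lam * (sl + r0) - \<gamma> * sl * (H 0 * (sl + r0))"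
    by (simp add: algebra_simps)
  also have "\<dots> = - den"
    using H_surface unfolding sl_def[symmetric] r0_def[symmetric]
    by (simp add: den_def r0(2) algebra_simps flip: sl(2))
  finally have W: "g * H 0 - lam - \<gamma> * sl * H 0 = - den / (sl + r0)"
    using pos by (simp add: field_simps)
  have KD: "C0 g lam \<gamma> p0 * Delta g lam \<gamma> * den = sl * X' * (r0 + sl) / 4"
    using Delta_ne den unfolding C0_def sl_def[symmetric] r0_def[symmetric]
    unfolding den_def[symmetric] X'_def[symmetric] by (simp add: add.commute)
  have "2 * C0 g lam \<gamma> p0 / sl ^ 3 * (g * H 0 - lam - \<gamma> * sl * H 0) * Delta g lam \<gamma>
      = - 2 * (C0 g lam \<gamma> p0 * Delta g lam \<gamma> * den) / (sl ^ 3 * (sl + r0))"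
    unfolding W by (simp add: field_simps)
  also have "\<dots> = - X' / (2 * lam)"
    unfolding KD using pos sl by (simp add: add.commute[of r0] power2_eq_square power3_eq_cube flip: sl(2))
  finally show ?thesis unfolding sl_def X'_def .
qed

lemma surface_mode0:
  "amp 0 ^ 2 / 2 + 2 * g * u_mean (C0 g lam \<gamma> p0) 0 / lam + 2 * g * (amp 0 * amp_d1 0) / sqrt lam
     - 2 * sqrt lam * u_mean_d1 (C0 g lam \<gamma> p0) 0 - lam * amp_d1 0 ^ 2 / 2 = 0"
proof -
  define sl where "sl = sqrt lam"
  define D where "D = Delta g lam \<gamma>"
  define r0 K H0 where "r0 = r p0" and "K = C0 g lam \<gamma> p0" and "H0 = H 0"
  define X Y where "X = cosh (2 * H0)" and "Y = sinh (2 * H0)"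
  define T where "T = g - \<gamma> * sl"
  have sl: "sl > 0" "sl * sl = lam" using lam_pos by (auto simp: sl_def)
  have D: "D = T^2 - (sl * sl)^2" "D \<noteq> 0" using Delta_ne by (simp_all add: D_def Delta_def T_def sl_def)
  have X: "X * D = T^2 + (sl * sl)^2" and Y: "Y * D = 2 * (sl * sl) * T"
    using surface_double_angle lam_pos by (simp_all add: X_def Y_def H0_def D_def T_def sl sl_def)
  have X1: "(1 - X) * D = - 2 * (sl * sl)^2"
    using X D(1) by (simp only: left_diff_distrib mult_1)
  have K: "2 * K / sl^3 * (g * H0 - sl * sl - \<gamma> * sl * H0) * D
      = - (3 * g * T + sl * sl * (\<gamma>^2 - sl * sl)) / (2 * (sl * sl))"
    using surface_C0_term unfolding sl(2) by (simp add: K_def H0_def D_def T_def sl_def)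
  define a b c where "a = \<gamma>^2 / sl^4 - 5 * g * \<gamma> / (4 * sl^5) - 1 / (2 * sl^2)"
    and "b = 3 / (2 * sl^2)"
    and "c = (3 * g - 4 * \<gamma> * sl) / (2 * sl^4)"
  define F where "F = 2 * K / sl^3 * (g * H0 - sl * sl - \<gamma> * sl * H0) + a * (1 - X) - b * X + c * Y"
  have "amp 0 ^ 2 / 2 + 2 * g * u_mean K 0 / lam + 2 * g * (amp 0 * amp_d1 0) / sqrt lam
     - 2 * sqrt lam * u_mean_d1 K 0 - lam * amp_d1 0 ^ 2 / 2 = r0^2 * F"
    unfolding amp_products[OF zero_in_smooth_dom] u_mean_def u_mean_d1_def u_common_def u_common_d1_def
      r_surface sl_def[symmetric] r0_def[symmetric] H0_def[symmetric]
    unfolding X_def[symmetric] Y_def[symmetric] F_def a_def b_def c_def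
    unfolding sl(2)[symmetric]
    using sl(1) by (simp add: field_simps eval_nat_numeral)
  moreover have "F * D = 0"
  proof -
    have "F * D = 2 * K / sl^3 * (g * H0 - sl * sl - \<gamma> * sl * H0) * D
        + a * ((1 - X) * D) - b * (X * D) + c * (Y * D)"
      by (simp add: F_def algebra_simps)
    also have "\<dots> = - (3 * g * T + sl * sl * (\<gamma>^2 - sl * sl)) / (2 * (sl * sl))
        + a * (- 2 * (sl * sl)^2) - b * (T^2 + (sl * sl)^2) + c * (2 * (sl * sl) * T)"
      by (simp only: K X Y X1)
    also have "\<dots> = 0"
      using sl(1) unfolding a_def b_def c_def T_def
      by (simp add: field_simps) (simp add: algebra_simps power2_eq_square eval_nat_numeral)
    finally show ?thesis .
  qed
  ultimately show ?thesis using D(2) by (simp add: K_def)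
qed

lemma opB0_hstar_poly_O3: "poly_O3 6 (\<lambda>b. opB0 g (Qstar g lam \<gamma> p0) (hstar g lam \<gamma> p0 b) q)"
proof -
  define c0 c2 where "c0 = C0 g lam \<gamma> p0" and "c2 = C2 g lam \<gamma>"
  define P where "P = opB0_poly g (Qstar g lam \<gamma> p0)
    [:0, - amp 0 * sin q, - 2 * u_harm c2 0 * sin (2 * q):]
    [:1 / r 0, amp_d1 0 * cos q, u_mean_d1 c0 0 + u_harm_d1 c2 0 * cos (2 * q):]
    [:H 0, amp 0 * cos q, u_mean c0 0 + u_harm c2 0 * cos (2 * q):]"
  have sl: "sqrt lam > 0" "sqrt lam ^ 2 = lam" using lam_pos by auto
  have Q: "2 * g * H 0 - Qstar g lam \<gamma> p0 = - lam" by (simp add: Qstar_eq)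
  have "coeff P 0 = 0"
    unfolding P_def coeff_opB0_poly_quadratic Q r_surface using sl by (simp add: power_divide)
  moreover have "coeff P 1 = 0"
  proof -
    have "g * (sqrt lam * amp 0) = sqrt lam * (lam * sqrt lam * amp_d1 0)"
      using surface_order1 by simp
    also have "\<dots> = lam * (lam * amp_d1 0)"
      using sl by (simp add: power2_eq_square)
    finally show ?thesis
      unfolding P_def coeff_opB0_poly_quadratic Q r_surface using sl by (simp add: field_simps)
  qed
  moreover have "coeff P 2 = 0"
  proof -
    have "coeff P 2 = (amp 0 ^ 2 / 2 + 2 * g * u_mean c0 0 / lam + 2 * g * (amp 0 * amp_d1 0) / sqrt lam
        - 2 * sqrt lam * u_mean_d1 c0 0 - lam * amp_d1 0 ^ 2 / 2)
      + cos (2 * q) * (- (amp 0 ^ 2) / 2 + 2 * g * u_harm c2 0 / lam + 2 * g * (amp 0 * amp_d1 0) / sqrt lam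
        - 2 * sqrt lam * u_harm_d1 c2 0 - lam * amp_d1 0 ^ 2 / 2)"
      unfolding P_def coeff_opB0_poly_quadratic Q r_surface cos_double_sin[of q] using sl
      by (simp add: field_simps) (insert sin_cos_squared_add[of q] sl(2), algebra)
    then show ?thesis using surface_mode0 surface_mode2 by (simp add: c0_def c2_def)
  qed
  moreover have "degree P \<le> 6"
    unfolding P_def by (intro degree_opB0_poly_le degree_quadratic_le)
  moreover have "opB0 g (Qstar g lam \<gamma> p0) (hstar g lam \<gamma> p0 b) q = poly P b" for b
    unfolding P_def hstar_eq_cos_ansatz c0_def[symmetric] c2_def[symmetric]
    by (intro opB0_eq_poly partials_profile_ansatz zero_in_smooth_dom)
      (simp add: cos_ansatz_def algebra_simps power2_eq_square)
  ultimately show ?thesis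
    unfolding poly_O3_def by (intro exI[of _ P]) (auto simp: less_Suc_eq numeral_3_eq_3 numeral_2_eq_2 fun_eq_iff)
qed
end

theorem mainTheorem3:
  fixes g \<gamma> p0 lam :: real
  assumes hg: "g > 0" and hp0: "p0 < 0"
    and hlam: "lam > 0" and hlam2: "lam - 2 * \<gamma> * p0 > 0"
    and hne: "g - \<gamma> * sqrt lam \<noteq> 0"
    and disp: "lam / (g - \<gamma> * sqrt lam) + tanh (2 * p0 / (sqrt lam + sqrt (lam - 2 * \<gamma> * p0))) = 0"
    and hDelta: "Delta g lam \<gamma> \<noteq> 0"
    and hden: "2 * g * p0 + lam * rr lam \<gamma> p0 + sqrt lam * (rr lam \<gamma> p0)^2 \<noteq> 0"
  shows
    "(\<exists>N c. \<forall>b q p. q \<in> {-pi..pi} \<longrightarrow> p \<in> {p0..0} \<longrightarrow>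
        opH \<gamma> (hstar g lam \<gamma> p0 b) q p = (\<Sum>k\<in>{3..N}. c k q p * b^k))
   \<and> (\<exists>N c. \<forall>b q.
        opB0 g (Qstar g lam \<gamma> p0) (hstar g lam \<gamma> p0 b) q = (\<Sum>k\<in>{3..N}. c k q * b^k))
   \<and> (\<forall>b q. opB1 p0 (hstar g lam \<gamma> p0 b) q = 0)"
proof -
  have surface: "surface_dispersion lam \<gamma> p0 g"
    using hlam hlam2 hne disp hDelta hden by unfold_locales
  then have flow: "laminar_flow lam \<gamma> p0"
    by (rule surface_dispersion.axioms(1))
  have "\<forall>x\<in>{-pi..pi} \<times> {p0..0}. poly_O3 6 (\<lambda>b. opH \<gamma> (hstar g lam \<gamma> p0 b) (fst x) (snd x))"
    using laminar_flow.opH_cos_ansatz_poly_O3[OF flow] laminar_flow.layer_subset_smooth_dom[OF flow]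
    by (auto simp: laminar_flow.hstar_eq_cos_ansatz[OF flow])
  then obtain cH where cH: "\<forall>b. \<forall>x\<in>{-pi..pi} \<times> {p0..0}.
      opH \<gamma> (hstar g lam \<gamma> p0 b) (fst x) (snd x) = (\<Sum>k\<in>{3..6}. cH k x * b ^ k)"
    using poly_O3_imp_sum[where f = "\<lambda>b x. opH \<gamma> (hstar g lam \<gamma> p0 b) (fst x) (snd x)"] by blast
  obtain cB where cB: "\<forall>b. \<forall>q\<in>UNIV.
      opB0 g (Qstar g lam \<gamma> p0) (hstar g lam \<gamma> p0 b) q = (\<Sum>k\<in>{3..6}. cB k q * b ^ k)"
    using poly_O3_imp_sum[where f = "\<lambda>b q. opB0 g (Qstar g lam \<gamma> p0) (hstar g lam \<gamma> p0 b) q"]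
      surface_dispersion.opB0_hstar_poly_O3[OF surface]
    by blast
  have "\<forall>b q. opB1 p0 (hstar g lam \<gamma> p0 b) q = 0"
    by (simp add: opB1_def hstar_def mm_def uu_def HH_def Let_def)
  with cH cB show ?thesis
    by (intro conjI exI[of _ 6] exI[of _ "\<lambda>k q p. cH k (q, p)"] exI[of _ cB]) auto
qed

thm_deps mainTheorem3

end
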